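(* Let $r_1,r_2\in\mathbb{R}$, $A=(a_{ij})_{i,j=1,2}$ with $a_{ij}>0$, $A$ invertible, $(b_1,b_2)^T=A^{-1}(r_1,r_2)^T$ with $b_1,b_2>0$; assume $\langle Ax,x\rangle>0$ for all $x\in\mathbb{R}^2\setminus\{0\}$ and that $\begin{pmatrix}b_1a_{11}&b_1a_{12}\\ b_2a_{21}&b_2a_{22}\end{pmatrix}$ has two real eigenvalues $\mu_1,\mu_2>0$. Let $\tau>0$ with $\min\{2\pi/\mu_1,2\pi/\mu_2\}<\tau$ and suppose there are $n_1\neq n_2$ in $\mathbb{N}\cup\{0\}$ with $\frac{\pi}{2}+2n_i\pi<\mu_i\tau<\frac{\pi}{2}+2(n_i+1)\pi$ for $i=1,2$. Consider $$\dot x_1(t)=-\lambda\big(a_{11}x_1(t-\tau/\lambda)+a_{12}x_2(t-\tau/\lambda)\big)(b_1+x_1(t)),$$ $$\dot x_2(t)=-\lambda\big(a_{21}x_1(t-\tau/\lambda)+a_{22}x_2(t-\tau/\lambda)\big)(b_2+x_2(t)).\qquad(\mathrm{P})$$ Let $\lambda_1,\lambda_2\in\mathbb{R}^+$ with $\lambda_1<\lambda_2$. Then the origin is an isolated solution of (P): there exists $m_1>0$ such that if $((x_1,x_2),\lambda)\in\Theta_0\times[\lambda_1,\lambda_2]$ is a nontrivial solution of (P), then $(x_1,x_2)\notin\{(x_1,x_2)\in\Theta_0:\|x_1\|\le m_1,\ \|x_2\|\le m_1\}$.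
   Context: $\hat E$ denotes the Banach space of functions $x\in C([0,2\pi],\mathbb{R})$ with $\int_0^{2\pi}\dot x(t)^2\,dt<\infty$, $x(0)=x(2\pi)$ and $\int_0^{2\pi}x(t)\,dt=0$, with norm $\|x\|^2=\int_0^{2\pi}(\dot x(t)^2+x(t)^2)\,dt$; such functions are identified with their $2\pi$-periodic extensions to $\mathbb{R}$. $E=\hat E\times\hat E$ and $\Theta_0=\{(x_1,x_2)\in E: x_i(t)>-b_i\text{ for }t\in[0,2\pi],\ i=1,2\}$. A solution $((x_1,x_2),\lambda)$ of (P) is a pair $(x_1,x_2)\in E$ and $\lambda>0$ satisfying (P) for all $t$; nontrivial means $(x_1,x_2)\not\equiv 0$. *)

theory Defs
  imports "HOL-Analysis.Analysis"
begin

definition weak_deriv_L2 :: "(real \<Rightarrow> real) \<Rightarrow> (real \<Rightarrow> real) \<Rightarrow> bool" where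
  "weak_deriv_L2 x y \<longleftrightarrow>
     y integrable_on {0..2*pi} \<and> (\<lambda>t. (y t)^2) integrable_on {0..2*pi} \<and>
     (\<forall>t\<in>{0..2*pi}. x t = x 0 + integral {0..t} y)"

text \<open>The space E-hat (functions identified with their 2pi-periodic extensions to the reals).\<close>
definition E_hat :: "(real \<Rightarrow> real) set" where
  "E_hat = {x. continuous_on UNIV x \<and> (\<forall>t. x (t + 2*pi) = x t) \<and>
                (\<exists>y. weak_deriv_L2 x y) \<and> integral {0..2*pi} x = 0}"

definition Ehat_norm :: "(real \<Rightarrow> real) \<Rightarrow> real" where
  "Ehat_norm x = sqrt (integral {0..2*pi}
       (\<lambda>t. ((SOME y. weak_deriv_L2 x y) t)^2 + (x t)^2))"

definition Theta0 :: "real \<Rightarrow> real \<Rightarrow> ((real \<Rightarrow> real) \<times> (real \<Rightarrow> real)) set" where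
  "Theta0 b1 b2 = {(x1, x2). x1 \<in> E_hat \<and> x2 \<in> E_hat \<and>
       (\<forall>t\<in>{0..2*pi}. x1 t > - b1 \<and> x2 t > - b2)}"

definition is_solution_P ::
  "real \<Rightarrow> real \<Rightarrow> real \<Rightarrow> real \<Rightarrow> real \<Rightarrow> real \<Rightarrow> real \<Rightarrow>
   (real \<Rightarrow> real) \<Rightarrow> (real \<Rightarrow> real) \<Rightarrow> real \<Rightarrow> bool" where
  "is_solution_P a11 a12 a21 a22 b1 b2 \<tau> x1 x2 lam \<longleftrightarrow>
     x1 \<in> E_hat \<and> x2 \<in> E_hat \<and> lam > 0 \<and>
     (\<forall>t. (x1 has_real_derivative
            (- lam * (a11 * x1 (t - \<tau>/lam) + a12 * x2 (t - \<tau>/lam)) * (b1 + x1 t))) (at t)) \<and>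
     (\<forall>t. (x2 has_real_derivative
            (- lam * (a21 * x1 (t - \<tau>/lam) + a22 * x2 (t - \<tau>/lam)) * (b2 + x2 t))) (at t))"

definition eigenvalue2 :: "real \<Rightarrow> real \<Rightarrow> real \<Rightarrow> real \<Rightarrow> real \<Rightarrow> bool" where
  "eigenvalue2 m11 m12 m21 m22 \<mu> \<longleftrightarrow>
     (\<exists>v1 v2. (v1, v2) \<noteq> (0, 0) \<and> m11 * v1 + m12 * v2 = \<mu> * v1 \<and> m21 * v1 + m22 * v2 = \<mu> * v2)"

end

theory Submission
  imports Defs "HOL-Library.Periodic_Fun"
begin

(*
  Let (p_j, q_j) be left eigenvectors of the matrix (b_i a_ij) for its two distinct
  eigenvalues mu_j. For a solution, w_j = p_j x_1 + q_j x_2 satisfies the scalar delay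
  equation w_j' = - lam mu_j w_j(t - tau/lam) + g_j, where g_j is quadratic in x. On the k-th
  Fourier coefficient the linear part acts as multiplication by i k + lam mu_j exp(-i k tau/lam),
  which can only vanish if sin(mu_j tau) = 1. The window condition on mu_j tau rules this out,
  and compactness of [lam_1, lam_2] together with the growth in k gives a uniform lower bound
  delta. Bessel's inequality and completeness of the trigonometric system (via
  Stone-Weierstrass) then give |w_j|_2 <= |g_j|_2 / delta. Since the norm of E controls the
  sup norm, a solution of norm at most m has |g_j|_2 <= C m (|w_1|_2 + |w_2|_2), which for
  small m forces w = 0.
*)

section \<open>Periodic functions\<close>

lemma decompose_mod_period:
  fixes c p :: real
  assumes "p > 0"
  obtains n :: int and c0 where "c0 \<in> {0..p}" "c = c0 + of_int n * p"
proof (rule that[of _ "\<lfloor>c / p\<rfloor>"])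
  show "c - of_int \<lfloor>c / p\<rfloor> * p \<in> {0..p}"
    using floor_divide_lower[OF assms, of c] floor_divide_upper[OF assms, of c]
    by (auto simp: algebra_simps)
qed simp

lemma periodic_fun_simple_reduce:
  fixes f :: "real \<Rightarrow> 'a"
  assumes "periodic_fun_simple f p" "p > 0"
  obtains t0 where "t0 \<in> {0..p}" "f t = f t0"
proof -
  interpret periodic_fun_simple f p by fact
  obtain n t0 where "t0 \<in> {0..p}" "t = t0 + of_int n * p"
    using decompose_mod_period[OF assms(2)] .
  then show ?thesis using that plus_of_int[of t0 n] by simp
qed

lemma has_integral_periodic_shift:
  fixes F :: "real \<Rightarrow> 'a::euclidean_space"
  assumes cont: "continuous_on UNIV F" and per: "periodic_fun_simple F p" and p: "p > 0"
  shows "((\<lambda>t. F (t + c)) has_integral integral {0..p} F) {0..p}"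
proof -
  interpret periodic_fun_simple F p by fact
  obtain n c0 where c0: "c0 \<in> {0..p}" and c: "c = c0 + of_int n * p"
    using decompose_mod_period[OF p] .
  have int: "F integrable_on {a..b}" for a b
    by (rule integrable_continuous_interval) (rule continuous_on_subset[OF cont], simp)
  have "integral {p..p + c0} F = integral {0..c0} (\<lambda>t. F (t + p))"
    using integral_shift_Icc_real[of 0 c0 F p] by (simp add: o_def add.commute)
  also have "\<dots> = integral {0..c0} F"
    by (simp add: plus_period)
  finally have "integral {c0..p + c0} F = integral {0..p} F"
    using Henstock_Kurzweil_Integration.integral_combine[of c0 p "p + c0" F]
      Henstock_Kurzweil_Integration.integral_combine[of 0 c0 p F] c0 int
    by (simp add: add.commute)
  then have "(F has_integral integral {0..p} F) {0 + c0..p + c0}"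
    using int by (metis add_0 integrable_integral)
  then have "((\<lambda>t. F (t + c0)) has_integral integral {0..p} F) {0..p}"
    using has_integral_shift_real_ivl[where f=F and a="0 + c0" and b="p + c0" and c=c0] by simp
  moreover have "F (t + c) = F (t + c0)" for t
    using plus_of_int[of "t + c0" n] by (simp add: c add.assoc)
  ultimately show ?thesis by simp
qed

section \<open>Fourier coefficients\<close>

lemma has_vector_derivative_cis_mult:
  "((\<lambda>t. cis (c * t)) has_vector_derivative (\<i> * of_real c * cis (c * t))) (at t within S)"
proof -
  have "((\<lambda>t. exp (t *\<^sub>R (\<i> * of_real c))) has_vector_derivative
          exp (t *\<^sub>R (\<i> * of_real c)) * (\<i> * of_real c)) (at t within S)"
    by (rule exp_scaleR_has_vector_derivative_right)
  moreover have "exp (t *\<^sub>R (\<i> * of_real c)) = cis (c * t)" for t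
    by (simp add: cis_conv_exp scaleR_conv_of_real mult_ac)
  ultimately show ?thesis by (simp add: mult_ac)
qed

lemma cis_of_int_mult_2pi [simp]: "cis (of_int m * (2 * pi)) = 1"
  using cis_multiple_2pi[of "of_int m"] by (simp add: mult_ac)

lemma has_integral_cis_of_int:
  "((\<lambda>t. cis (of_int m * t)) has_integral (if m = 0 then of_real (2 * pi) else 0)) {0..2*pi}"
proof (cases "m = 0")
  case True
  then show ?thesis
    using has_integral_const_real[of "1::complex" 0 "2*pi"] by (simp add: scaleR_conv_of_real)
next
  case False
  have "((\<lambda>t. \<i> * of_int m * cis (of_int m * t)) has_integral
          cis (of_int m * (2*pi)) - cis (of_int m * 0)) {0..2*pi}"
    using has_vector_derivative_cis_mult[of "of_int m"]
    by (intro fundamental_theorem_of_calculus) simp_all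
  then have "((\<lambda>t. \<i> * of_int m * cis (of_int m * t)) has_integral 0) {0..2*pi}"
    by simp
  from has_integral_mult_right[OF this, of "1 / (\<i> * of_int m)"] False show ?thesis
    by simp
qed

definition fourier_coeff :: "(real \<Rightarrow> real) \<Rightarrow> int \<Rightarrow> complex" where
  "fourier_coeff f k = integral {0..2*pi} (\<lambda>t. of_real (f t) * cis (- (of_int k * t)))"

lemma fourier_coeff_has_integral:
  assumes "continuous_on {0..2*pi} f"
  shows "((\<lambda>t. of_real (f t) * cis (- (of_int k * t))) has_integral fourier_coeff f k) {0..2*pi}"
proof -
  have "continuous_on {0..2*pi} (\<lambda>t. of_real (f t) * cis (- (of_int k * t)))"
    by (intro continuous_intros assms)
  then show ?thesis
    unfolding fourier_coeff_def by (intro integrable_integral integrable_continuous_interval)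
qed

lemma fourier_coeff_add:
  assumes "continuous_on {0..2*pi} f" "continuous_on {0..2*pi} g"
  shows "fourier_coeff (\<lambda>t. f t + g t) k = fourier_coeff f k + fourier_coeff g k"
proof -
  have "((\<lambda>t. of_real (f t + g t) * cis (- (of_int k * t))) has_integral
          fourier_coeff f k + fourier_coeff g k) {0..2*pi}"
    using has_integral_add[OF fourier_coeff_has_integral[OF assms(1)]
                              fourier_coeff_has_integral[OF assms(2)]]
    by (simp add: distrib_right)
  then show ?thesis by (simp add: fourier_coeff_def integral_unique)
qed

lemma fourier_coeff_cmult: "fourier_coeff (\<lambda>t. c * f t) k = of_real c * fourier_coeff f k"
  unfolding fourier_coeff_def by (simp add: mult.assoc)

lemma fourier_coeff_shift:
  assumes "continuous_on UNIV w" "periodic_fun_simple w (2*pi)"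
  shows "fourier_coeff (\<lambda>t. w (t - s)) k = cis (- (of_int k * s)) * fourier_coeff w k"
proof -
  interpret periodic_fun_simple w "2*pi" by fact
  define G where "G = (\<lambda>u. of_real (w u) * cis (- (of_int k * u)))"
  have "continuous_on UNIV G"
    unfolding G_def by (intro continuous_intros assms(1))
  moreover have "periodic_fun_simple G (2*pi)"
  proof
    fix u
    have "cis (- (of_int k * (u + 2*pi))) = cis (- (of_int k * u)) * cis (of_int (- k) * (2*pi))"
      by (simp add: cis_mult algebra_simps)
    then show "G (u + 2*pi) = G u"
      using cis_of_int_mult_2pi[of "- k"] by (simp add: G_def plus_period)
  qed
  ultimately have "((\<lambda>t. G (t + - s)) has_integral fourier_coeff w k) {0..2*pi}"
    using has_integral_periodic_shift[of G "2*pi" "- s"] by (simp add: G_def fourier_coeff_def)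
  from has_integral_mult_left[OF this, of "cis (- (of_int k * s))"]
  have "((\<lambda>t. of_real (w (t - s)) * cis (- (of_int k * t))) has_integral
          cis (- (of_int k * s)) * fourier_coeff w k) {0..2*pi}"
    by (simp add: G_def cis_mult algebra_simps)
  then show ?thesis by (simp add: fourier_coeff_def integral_unique)
qed

lemma fourier_coeff_deriv:
  assumes deriv: "\<And>t. (w has_real_derivative w' t) (at t)"
    and cont: "continuous_on UNIV w'" and per: "w (2*pi) = w 0"
  shows "fourier_coeff w' k = \<i> * of_int k * fourier_coeff w k"
proof -
  define c where "c = - \<i> * of_int k"
  define E where "E = (\<lambda>t. cis (- (of_int k * t)))"
  have cw: "continuous_on UNIV w"
    using DERIV_isCont[OF deriv] by (simp add: continuous_at_imp_continuous_on)
  have hw: "((\<lambda>t. of_real (w t) * E t) has_integral fourier_coeff w k) {0..2*pi}"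
    unfolding E_def by (rule fourier_coeff_has_integral[OF continuous_on_subset[OF cw subset_UNIV]])
  have hw': "((\<lambda>t. of_real (w' t) * E t) has_integral fourier_coeff w' k) {0..2*pi}"
    unfolding E_def by (rule fourier_coeff_has_integral[OF continuous_on_subset[OF cont subset_UNIV]])
  have dE: "(E has_vector_derivative (c * E t)) (at t within S)" for t S
    using has_vector_derivative_cis_mult[of "- of_int k" t S] by (simp add: E_def c_def)
  have dw: "((\<lambda>t. of_real (w t)) has_vector_derivative of_real (w' t)) (at t within S)" for t S
    by (rule has_vector_derivative_of_real) (rule has_field_derivative_at_within[OF deriv])
  have "((\<lambda>t. of_real (w t) * E t) has_vector_derivative
          of_real (w t) * (c * E t) + of_real (w' t) * E t) (at t within S)" for t S
    by (rule has_vector_derivative_mult[OF dw dE])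
  then have "((\<lambda>t. of_real (w t) * (c * E t) + of_real (w' t) * E t)
               has_integral (of_real (w (2*pi)) * E (2*pi) - of_real (w 0) * E 0)) {0..2*pi}"
    by (intro fundamental_theorem_of_calculus) simp_all
  moreover have "of_real (w (2*pi)) * E (2*pi) - of_real (w 0) * E 0 = 0"
    using per cis_of_int_mult_2pi[of "- k"] by (simp add: E_def)
  moreover have "((\<lambda>t. of_real (w t) * (c * E t) + of_real (w' t) * E t)
                   has_integral c * fourier_coeff w k + fourier_coeff w' k) {0..2*pi}"
    using has_integral_add[OF has_integral_mult_right[OF hw, of c] hw']
    by (simp only: mult.left_commute)
  ultimately have "c * fourier_coeff w k + fourier_coeff w' k = 0"
    using has_integral_unique by metis
  then show ?thesis
    by (simp add: c_def eq_neg_iff_add_eq_0 add.commute)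
qed

definition delay_symbol :: "real \<Rightarrow> real \<Rightarrow> int \<Rightarrow> complex" where
  "delay_symbol a s k = \<i> * of_int k + of_real a * cis (- (of_int k * s))"

lemma fourier_coeff_delay_equation:
  assumes per: "periodic_fun_simple w (2*pi)" and cg: "continuous_on UNIV g"
    and deriv: "\<And>t. (w has_real_derivative (- a * w (t - s) + g t)) (at t)"
  shows "delay_symbol a s k * fourier_coeff w k = fourier_coeff g k"
proof -
  interpret periodic_fun_simple w "2*pi" by fact
  have cw: "continuous_on UNIV w"
    using DERIV_isCont[OF deriv] by (simp add: continuous_at_imp_continuous_on)
  have cw_s: "continuous_on A (\<lambda>t. - a * w (t - s))" for A
    by (intro continuous_intros continuous_on_compose2[OF cw]) auto
  have "continuous_on UNIV (\<lambda>t. - a * w (t - s) + g t)"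
    by (intro continuous_intros cw_s cg)
  then have "\<i> * of_int k * fourier_coeff w k = fourier_coeff (\<lambda>t. - a * w (t - s) + g t) k"
    using fourier_coeff_deriv[OF deriv] plus_period[of 0] by simp
  also have "\<dots> = fourier_coeff (\<lambda>t. - a * w (t - s)) k + fourier_coeff g k"
    by (rule fourier_coeff_add[OF cw_s continuous_on_subset[OF cg subset_UNIV]])
  also have "\<dots> = - a * (cis (- (of_int k * s)) * fourier_coeff w k) + fourier_coeff g k"
    by (simp only: fourier_coeff_cmult fourier_coeff_shift[OF cw per])
  finally show ?thesis by (simp add: delay_symbol_def algebra_simps)
qed

definition L2_norm_sq :: "(real \<Rightarrow> real) \<Rightarrow> real" where
  "L2_norm_sq f = integral {0..2*pi} (\<lambda>t. (f t)^2)"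

lemma has_integral_L2_norm_sq:
  assumes "continuous_on {0..2*pi} f"
  shows "((\<lambda>t. (f t)^2) has_integral L2_norm_sq f) {0..2*pi}"
  unfolding L2_norm_sq_def
  by (intro integrable_integral integrable_continuous_interval continuous_intros assms)

lemma L2_norm_sq_nonneg:
  assumes "continuous_on {0..2*pi} f"
  shows "L2_norm_sq f \<ge> 0"
  by (rule has_integral_nonneg[OF has_integral_L2_norm_sq[OF assms]]) simp

definition trig_sum :: "int set \<Rightarrow> (int \<Rightarrow> complex) \<Rightarrow> real \<Rightarrow> complex" where
  "trig_sum K d t = (\<Sum>k\<in>K. d k * cis (of_int k * t))"

lemma has_integral_mult_cnj_trig_sum:
  assumes "continuous_on {0..2*pi} f" "finite K"
  shows "((\<lambda>t. of_real (f t) * cnj (trig_sum K d t)) has_integral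
           (\<Sum>k\<in>K. cnj (d k) * fourier_coeff f k)) {0..2*pi}"
proof -
  have "of_real (f t) * cnj (trig_sum K d t)
          = (\<Sum>k\<in>K. cnj (d k) * (of_real (f t) * cis (- (of_int k * t))))" for t
    by (simp add: trig_sum_def cis_cnj sum_distrib_left algebra_simps)
  then show ?thesis
    using assms by (simp only:) (intro has_integral_sum has_integral_mult_right fourier_coeff_has_integral)
qed

lemma has_integral_trig_sum_mult_cnj:
  assumes K: "finite K"
  shows "((\<lambda>t. trig_sum K d t * cnj (trig_sum K d t)) has_integral
           of_real (2*pi * (\<Sum>k\<in>K. (cmod (d k))^2))) {0..2*pi}"
proof -
  have "trig_sum K d t * cnj (trig_sum K d t)
          = (\<Sum>k\<in>K. \<Sum>l\<in>K. (d k * cnj (d l)) * cis (of_int (k - l) * t))" for t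
    unfolding trig_sum_def cnj_sum sum_product
    by (intro sum.cong refl) (simp add: cis_cnj cis_mult algebra_simps)
  then have "((\<lambda>t. trig_sum K d t * cnj (trig_sum K d t)) has_integral
               (\<Sum>k\<in>K. \<Sum>l\<in>K. (d k * cnj (d l)) * (if k - l = 0 then of_real (2*pi) else 0))) {0..2*pi}"
    using K by (simp only:) (intro has_integral_sum has_integral_mult_right has_integral_cis_of_int)
  also have "(\<Sum>k\<in>K. \<Sum>l\<in>K. (d k * cnj (d l)) * (if k - l = 0 then of_real (2*pi) else 0))
               = (\<Sum>k\<in>K. d k * cnj (d k) * of_real (2*pi))"
    using K by (intro sum.cong refl) (simp add: if_distrib sum.delta cong: if_cong)
  also have "\<dots> = (\<Sum>k\<in>K. of_real (2*pi * (cmod (d k))^2))"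
    by (intro sum.cong refl) (simp only: complex_norm_square[symmetric] of_real_mult mult.commute)
  also have "\<dots> = of_real (2*pi * (\<Sum>k\<in>K. (cmod (d k))^2))"
    by (simp only: of_real_sum sum_distrib_left)
  finally show ?thesis .
qed

lemma has_integral_sq_dist_trig_sum:
  assumes cf: "continuous_on {0..2*pi} f" and K: "finite K"
  shows "((\<lambda>t. (cmod (of_real (f t) - trig_sum K d t))^2) has_integral
           L2_norm_sq f - 2 * Re (\<Sum>k\<in>K. cnj (d k) * fourier_coeff f k)
             + 2*pi * (\<Sum>k\<in>K. (cmod (d k))^2)) {0..2*pi}"
proof -
  have "(cmod (of_real x - z))^2 = x^2 - 2 * Re (of_real x * cnj z) + Re (z * cnj z)" for x z
    unfolding cmod_power2 by (simp add: power2_eq_square algebra_simps)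
  moreover have "((\<lambda>t. (f t)^2 - 2 * Re (of_real (f t) * cnj (trig_sum K d t))
                         + Re (trig_sum K d t * cnj (trig_sum K d t))) has_integral
                   L2_norm_sq f - 2 * Re (\<Sum>k\<in>K. cnj (d k) * fourier_coeff f k)
                     + Re (of_real (2*pi * (\<Sum>k\<in>K. (cmod (d k))^2)))) {0..2*pi}"
    by (intro has_integral_add has_integral_diff has_integral_mult_right has_integral_Re
        has_integral_mult_cnj_trig_sum has_integral_trig_sum_mult_cnj has_integral_L2_norm_sq cf K)
  ultimately show ?thesis
    by simp
qed

lemma Re_cnj_mult_le:
  fixes p :: real
  assumes "p > 0"
  shows "2 * Re (cnj d * c) \<le> p * (cmod d)^2 + (cmod c)^2 / p"
proof -
  have "0 \<le> (p * Re d - Re c)^2 + (p * Im d - Im c)^2" by simp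
  then have "2 * p * Re (cnj d * c) \<le> p * (p * (cmod d)^2) + (cmod c)^2"
    unfolding cmod_power2 by (simp add: power2_eq_square algebra_simps)
  with assms show ?thesis by (simp add: field_simps)
qed

lemma L2_norm_sq_le_sq_dist_trig_sum:
  assumes cf: "continuous_on {0..2*pi} f" and K: "finite K"
  shows "L2_norm_sq f \<le> (\<Sum>k\<in>K. (cmod (fourier_coeff f k))^2) / (2*pi)
           + integral {0..2*pi} (\<lambda>t. (cmod (of_real (f t) - trig_sum K d t))^2)"
proof -
  have "2 * Re (\<Sum>k\<in>K. cnj (d k) * fourier_coeff f k) = (\<Sum>k\<in>K. 2 * Re (cnj (d k) * fourier_coeff f k))"
    by (simp add: sum_distrib_left)
  also have "\<dots> \<le> (\<Sum>k\<in>K. 2*pi * (cmod (d k))^2 + (cmod (fourier_coeff f k))^2 / (2*pi))"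
    by (intro sum_mono Re_cnj_mult_le) simp
  also have "\<dots> = 2*pi * (\<Sum>k\<in>K. (cmod (d k))^2) + (\<Sum>k\<in>K. (cmod (fourier_coeff f k))^2) / (2*pi)"
    by (simp add: sum.distrib sum_distrib_left sum_divide_distrib)
  finally show ?thesis
    using integral_unique[OF has_integral_sq_dist_trig_sum[OF cf K, of d]] by simp
qed

lemma bessel_inequality:
  assumes cf: "continuous_on {0..2*pi} f" and K: "finite K"
  shows "(\<Sum>k\<in>K. (cmod (fourier_coeff f k))^2) \<le> 2*pi * L2_norm_sq f"
proof -
  define S where "S = (\<Sum>k\<in>K. (cmod (fourier_coeff f k))^2)"
  define d where "d k = fourier_coeff f k / (2*pi)" for k
  have "Re (cnj (d k) * fourier_coeff f k) = (cmod (fourier_coeff f k))^2 / (2*pi)" for k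
    by (simp add: d_def complex_norm_square[symmetric] mult.commute)
  then have "Re (\<Sum>k\<in>K. cnj (d k) * fourier_coeff f k) = S / (2*pi)"
    unfolding S_def Re_sum sum_divide_distrib by (rule sum.cong[OF refl])
  moreover have "2*pi * (\<Sum>k\<in>K. (cmod (d k))^2) = S / (2*pi)"
    by (simp add: S_def d_def norm_divide power2_eq_square sum_distrib_left sum_divide_distrib)
  moreover have "0 \<le> L2_norm_sq f - 2 * Re (\<Sum>k\<in>K. cnj (d k) * fourier_coeff f k)
                       + 2*pi * (\<Sum>k\<in>K. (cmod (d k))^2)"
    by (rule has_integral_nonneg[OF has_integral_sq_dist_trig_sum[OF cf K]]) simp
  ultimately have "S / (2*pi) \<le> L2_norm_sq f" by linarith
  then show ?thesis by (simp add: S_def field_simps)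
qed

section \<open>Completeness of the trigonometric system\<close>

lemma periodic_eq_if_cis_eq:
  assumes "periodic_fun_simple w (2*pi)" "cis a = cis b"
  shows "w a = w b"
proof -
  interpret periodic_fun_simple w "2*pi" by fact
  have "sin a = sin b \<and> cos a = cos b"
    using assms(2) by (simp add: complex_eq_iff)
  then obtain n :: int where "a = b + 2 * pi * n"
    using sin_cos_eq_iff by blast
  then show ?thesis
    using plus_of_int[of b n] by (simp add: mult_ac)
qed

lemma periodic_Arg_cis:
  assumes "periodic_fun_simple w (2*pi)"
  shows "w (Arg (cis t)) = w t"
  by (rule periodic_eq_if_cis_eq[OF assms]) (simp add: cis_Arg)

lemma continuous_on_sphere_periodic_Arg:
  assumes cw: "continuous_on UNIV w" and per: "periodic_fun_simple w (2*pi)"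
  shows "continuous_on (sphere 0 1) (\<lambda>z. w (Arg z))"
proof (rule continuous_at_imp_continuous_on, rule ballI)
  fix z :: complex
  assume "z \<in> sphere 0 1"
  then have z0: "z \<noteq> 0" by auto
  have wc: "isCont w x" for x
    using cw by (simp add: continuous_on_eq_continuous_at)
  show "isCont (\<lambda>z. w (Arg z)) z"
  proof (cases "z \<in> \<real>\<^sub>\<le>\<^sub>0")
    case False
    then show ?thesis by (intro isCont_o2[OF continuous_at_Arg[OF False] wc])
  next
    case True
    \<comment> \<open>\<open>Arg\<close> jumps on the negative axis, but \<open>Arg2pi\<close> is continuous there and
       differs from it by a multiple of \<open>2 pi\<close>\<close>
    have "w (Arg2pi u) = w (Arg u)" for u
    proof (cases "u = 0")
      case False
      have "is_Arg u (Arg u)" "is_Arg u (Arg2pi u)"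
        using is_Arg_Arg[OF False] Arg2pi by blast+
      then have "of_real (norm u) * exp (\<i> * of_real (Arg2pi u))
                   = of_real (norm u) * exp (\<i> * of_real (Arg u))"
        unfolding is_Arg_def by metis
      then have "cis (Arg2pi u) = cis (Arg u)"
        using False by (simp add: cis_conv_exp)
      then show ?thesis by (rule periodic_eq_if_cis_eq[OF per])
    qed (simp add: Arg_zero)
    moreover have "z \<notin> \<real>\<^sub>\<ge>\<^sub>0"
      using True z0 by (auto simp: nonpos_Reals_def nonneg_Reals_def)
    then have "isCont (\<lambda>z. w (Arg2pi z)) z"
      by (intro isCont_o2[OF continuous_at_Arg2pi wc])
    ultimately show ?thesis by simp
  qed
qed

definition trig_polynomial :: "(real \<Rightarrow> complex) \<Rightarrow> bool" where
  "trig_polynomial h \<longleftrightarrow> (\<exists>K d. finite K \<and> h = trig_sum K d)"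

lemma trig_polynomial_const: "trig_polynomial (\<lambda>t. c)"
  unfolding trig_polynomial_def trig_sum_def
  by (intro exI[of _ "{0}"] exI[of _ "\<lambda>_. c"]) simp

lemma trig_polynomial_add:
  assumes "trig_polynomial f" "trig_polynomial g"
  shows "trig_polynomial (\<lambda>t. f t + g t)"
proof -
  obtain K1 d1 where K1: "finite K1" "f = trig_sum K1 d1"
    using assms(1) unfolding trig_polynomial_def by blast
  obtain K2 d2 where K2: "finite K2" "g = trig_sum K2 d2"
    using assms(2) unfolding trig_polynomial_def by blast
  define d where "d k = (if k \<in> K1 then d1 k else 0) + (if k \<in> K2 then d2 k else 0)" for k
  have "trig_sum (K1 \<union> K2) d t
          = (\<Sum>k\<in>K1 \<union> K2. if k \<in> K1 then d1 k * cis (of_int k * t) else 0)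
            + (\<Sum>k\<in>K1 \<union> K2. if k \<in> K2 then d2 k * cis (of_int k * t) else 0)" for t
    unfolding trig_sum_def d_def sum.distrib[symmetric]
    by (intro sum.cong refl) (simp add: distrib_right)
  also have "\<dots> t = f t + g t" for t
    using K1 K2 sum.inter_restrict[of "K1 \<union> K2" "\<lambda>k. d1 k * cis (of_int k * t)" K1]
      sum.inter_restrict[of "K1 \<union> K2" "\<lambda>k. d2 k * cis (of_int k * t)" K2]
    by (simp add: trig_sum_def Un_Int_eq)
  finally have "(\<lambda>t. f t + g t) = trig_sum (K1 \<union> K2) d"
    by auto
  then show ?thesis
    unfolding trig_polynomial_def using K1 K2 by blast
qed

lemma trig_polynomial_mult:
  assumes "trig_polynomial f" "trig_polynomial g"
  shows "trig_polynomial (\<lambda>t. f t * g t)"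
proof -
  obtain K1 d1 where K1: "finite K1" "f = trig_sum K1 d1"
    using assms(1) unfolding trig_polynomial_def by blast
  obtain K2 d2 where K2: "finite K2" "g = trig_sum K2 d2"
    using assms(2) unfolding trig_polynomial_def by blast
  define S where "S = K1 \<times> K2"
  define deg where "deg p = fst p + snd p" for p :: "int \<times> int"
  define T where "T = deg ` S"
  define d where "d m = (\<Sum>p\<in>{p \<in> S. deg p = m}. d1 (fst p) * d2 (snd p))" for m
  have fS: "finite S" and fT: "finite T"
    using K1 K2 by (simp_all add: S_def T_def)
  have "f t * g t = trig_sum T d t" for t
  proof -
    have "f t * g t = (\<Sum>p\<in>S. d1 (fst p) * d2 (snd p) * cis (of_int (deg p) * t))"
      unfolding K1(2) K2(2) trig_sum_def S_def sum_product sum.cartesian_product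
      by (intro sum.cong refl) (auto simp: deg_def cis_mult algebra_simps)
    also have "\<dots> = (\<Sum>m\<in>T. \<Sum>p\<in>{p \<in> S. deg p = m}. d1 (fst p) * d2 (snd p) * cis (of_int (deg p) * t))"
      by (rule sum.group[symmetric, OF fS fT]) (simp add: T_def)
    also have "\<dots> = trig_sum T d t"
      unfolding trig_sum_def d_def sum_distrib_right
      by (intro sum.cong refl) auto
    finally show ?thesis .
  qed
  then show ?thesis
    unfolding trig_polynomial_def using fT by blast
qed

lemma trig_polynomial_cos_sin: "trig_polynomial (\<lambda>t. complex_of_real (A * cos t + B * sin t))"
proof -
  define d where "d k = Complex (A / 2) (if k = 1 then - B / 2 else B / 2)" for k :: int
  have "trig_sum {1, -1} d t = complex_of_real (A * cos t + B * sin t)" for t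
    by (simp add: trig_sum_def d_def complex_eq_iff)
  then show ?thesis
    unfolding trig_polynomial_def by (intro exI[of _ "{1, -1}"] exI[of _ d]) auto
qed

lemma trig_polynomial_bounded_linear:
  assumes "bounded_linear g"
  shows "trig_polynomial (\<lambda>t. complex_of_real (g (cis t)))"
proof -
  interpret g: bounded_linear g by (rule assms)
  have "cis t = cos t *\<^sub>R 1 + sin t *\<^sub>R \<i>" for t
    by (simp add: complex_eq_iff)
  then have "(\<lambda>t. g (cis t)) = (\<lambda>t. g 1 * cos t + g \<i> * sin t)"
    by (simp add: g.add g.scaleR mult.commute)
  then show ?thesis
    using trig_polynomial_cos_sin[of "g 1" "g \<i>"] by metis
qed

lemma trig_polynomial_real_polynomial_function:
  "real_polynomial_function g \<Longrightarrow> trig_polynomial (\<lambda>t. complex_of_real (g (cis t)))"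
proof (induction g rule: real_polynomial_function.induct)
  case (linear f)
  then show ?case by (rule trig_polynomial_bounded_linear)
next
  case (const c)
  then show ?case by (rule trig_polynomial_const)
next
  case (add f g)
  then show ?case using trig_polynomial_add[OF add.IH] by simp
next
  case (mult f g)
  then show ?case using trig_polynomial_mult[OF mult.IH] by simp
qed

lemma trig_sum_uniform_approx:
  assumes cw: "continuous_on UNIV w" and per: "periodic_fun_simple w (2*pi)" and e: "e > 0"
  obtains K d where "finite K" "\<And>t. cmod (of_real (w t) - trig_sum K d t) \<le> e"
proof -
  obtain g where g: "real_polynomial_function g"
    "\<And>z. z \<in> sphere 0 1 \<Longrightarrow> \<bar>w (Arg z) - g z\<bar> < e"
    using Stone_Weierstrass_real_polynomial_function[OF compact_sphere
        continuous_on_sphere_periodic_Arg[OF cw per] e] by blast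
  obtain K d where K: "finite K" "(\<lambda>t. complex_of_real (g (cis t))) = trig_sum K d"
    using trig_polynomial_real_polynomial_function[OF g(1)] unfolding trig_polynomial_def by blast
  have "cmod (of_real (w t) - trig_sum K d t) = \<bar>w (Arg (cis t)) - g (cis t)\<bar>" for t
    using fun_cong[OF K(2), of t] periodic_Arg_cis[OF per, of t]
    by (metis norm_of_real of_real_diff)
  also have "\<bar>w (Arg (cis t)) - g (cis t)\<bar> < e" for t
    by (rule g(2)) simp
  finally show ?thesis
    using that K(1) by (meson less_imp_le)
qed

lemma L2_norm_sq_le_fourier_sum:
  assumes cw: "continuous_on UNIV w" and per: "periodic_fun_simple w (2*pi)" and e: "e > 0"
  obtains K where "finite K" "L2_norm_sq w \<le> (\<Sum>k\<in>K. (cmod (fourier_coeff w k))^2) / (2*pi) + e"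
proof -
  define \<eta> where "\<eta> = sqrt (e / (2*pi))"
  have "\<eta> > 0" "2*pi * \<eta>^2 = e"
    using e by (simp_all add: \<eta>_def)
  obtain K d where K: "finite K" "\<And>t. cmod (of_real (w t) - trig_sum K d t) \<le> \<eta>"
    using trig_sum_uniform_approx[OF cw per \<open>\<eta> > 0\<close>] by blast
  have cw': "continuous_on {0..2*pi} w"
    using cw by (rule continuous_on_subset) simp
  have "integral {0..2*pi} (\<lambda>t. (cmod (of_real (w t) - trig_sum K d t))^2)
          \<le> integral {0..2*pi} (\<lambda>t. \<eta>^2)"
    by (intro integral_le has_integral_integrable[OF has_integral_sq_dist_trig_sum[OF cw' K(1)]]
        integrable_on_const power_mono K(2)) simp_all
  then show ?thesis
    using that K(1) L2_norm_sq_le_sq_dist_trig_sum[OF cw' K(1), of d] \<open>2*pi * \<eta>^2 = e\<close>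
    by (simp add: mult.commute)
qed

lemma delay_equation_L2_bound:
  assumes per: "periodic_fun_simple w (2*pi)" and cg: "continuous_on UNIV g"
    and deriv: "\<And>t. (w has_real_derivative (- a * w (t - s) + g t)) (at t)"
    and \<delta>: "\<delta> > 0" "\<And>k. \<delta> \<le> cmod (delay_symbol a s k)"
  shows "L2_norm_sq w \<le> L2_norm_sq g / \<delta>^2"
proof (rule field_le_epsilon)
  fix e :: real
  assume "e > 0"
  have cw: "continuous_on UNIV w"
    using DERIV_isCont[OF deriv] by (simp add: continuous_at_imp_continuous_on)
  obtain K where K: "finite K"
    "L2_norm_sq w \<le> (\<Sum>k\<in>K. (cmod (fourier_coeff w k))^2) / (2*pi) + e"
    using L2_norm_sq_le_fourier_sum[OF cw per \<open>e > 0\<close>] by blast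
  have "(cmod (fourier_coeff w k))^2 \<le> (cmod (fourier_coeff g k))^2 / \<delta>^2" for k
  proof -
    have "\<delta> * cmod (fourier_coeff w k) \<le> cmod (delay_symbol a s k) * cmod (fourier_coeff w k)"
      by (rule mult_right_mono[OF \<delta>(2)]) simp
    also have "\<dots> = cmod (fourier_coeff g k)"
      by (metis fourier_coeff_delay_equation[OF per cg deriv] norm_mult)
    finally have "(\<delta> * cmod (fourier_coeff w k))^2 \<le> (cmod (fourier_coeff g k))^2"
      using \<delta>(1) by (intro power_mono) simp_all
    then show ?thesis
      using \<delta>(1) by (simp add: power_mult_distrib field_simps)
  qed
  then have "(\<Sum>k\<in>K. (cmod (fourier_coeff w k))^2) \<le> (\<Sum>k\<in>K. (cmod (fourier_coeff g k))^2) / \<delta>^2"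
    by (simp add: sum_divide_distrib sum_mono)
  also have "\<dots> \<le> 2*pi * (L2_norm_sq g / \<delta>^2)"
    using bessel_inequality[OF continuous_on_subset[OF cg subset_UNIV] K(1)]
    by (simp add: divide_right_mono)
  finally have "(\<Sum>k\<in>K. (cmod (fourier_coeff w k))^2) / (2*pi) \<le> L2_norm_sq g / \<delta>^2"
    using pi_gt_zero by (simp add: divide_le_eq mult.commute)
  then show "L2_norm_sq w \<le> L2_norm_sq g / \<delta>^2 + e"
    using K(2) by linarith
qed

section \<open>Two coupled delay equations with small nonlinearity\<close>

lemma L2_norm_sq_shift:
  assumes "continuous_on UNIV w" "periodic_fun_simple w (2*pi)"
  shows "L2_norm_sq (\<lambda>t. w (t - s)) = L2_norm_sq w"
proof -
  have "continuous_on UNIV (\<lambda>t. (w t)^2)"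
    by (intro continuous_intros assms(1))
  moreover have "periodic_fun_simple (\<lambda>t. (w t)^2) (2*pi)"
    using assms(2) by (simp add: periodic_fun_simple_def)
  ultimately show ?thesis
    using has_integral_periodic_shift[of "\<lambda>t. (w t)^2" "2*pi" "- s"]
    by (simp add: L2_norm_sq_def integral_unique)
qed

lemma L2_norm_sq_eq_0_imp_zero:
  assumes "continuous_on {0..2*pi} w" "L2_norm_sq w = 0" "t \<in> {0..2*pi}"
  shows "w t = 0"
proof -
  have "((\<lambda>t. (w t)^2) has_integral 0) (cbox 0 (2*pi))"
    using has_integral_L2_norm_sq[OF assms(1)] assms(2) by simp
  moreover have "box 0 (2*pi) \<noteq> {}"
    using pi_gt_zero by (simp add: box_ne_empty not_le)
  moreover have "continuous_on (cbox 0 (2*pi)) (\<lambda>t. (w t)^2)"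
    using assms(1) by (auto intro!: continuous_intros)
  ultimately have "(w t)^2 = 0"
    using assms(3) by (intro has_integral_0_cbox_imp_0) auto
  then show ?thesis by simp
qed

lemma sq_abs_add_abs_le: "(\<bar>u\<bar> + \<bar>v\<bar>)^2 \<le> 2 * (u^2 + v^2 :: real)"
proof -
  have "0 \<le> (\<bar>u\<bar> - \<bar>v\<bar>)^2" by simp
  then show ?thesis by (simp add: power2_eq_square algebra_simps)
qed

lemma coupled_delay_equations_vanish:
  fixes w1 w2 g1 g2 :: "real \<Rightarrow> real"
  assumes per: "periodic_fun_simple w1 (2*pi)" "periodic_fun_simple w2 (2*pi)"
    and cont: "continuous_on UNIV g1" "continuous_on UNIV g2"
    and deriv1: "\<And>t. (w1 has_real_derivative (- a1 * w1 (t - s) + g1 t)) (at t)"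
    and deriv2: "\<And>t. (w2 has_real_derivative (- a2 * w2 (t - s) + g2 t)) (at t)"
    and \<delta>: "\<delta> > 0" "\<And>k. \<delta> \<le> cmod (delay_symbol a1 s k)" "\<And>k. \<delta> \<le> cmod (delay_symbol a2 s k)"
    and g_bound: "\<And>t. t \<in> {0..2*pi} \<Longrightarrow> \<bar>g1 t\<bar> \<le> C * (\<bar>w1 (t - s)\<bar> + \<bar>w2 (t - s)\<bar>)"
      "\<And>t. t \<in> {0..2*pi} \<Longrightarrow> \<bar>g2 t\<bar> \<le> C * (\<bar>w1 (t - s)\<bar> + \<bar>w2 (t - s)\<bar>)"
    and small: "8 * C^2 \<le> \<delta>^2"
  shows "w1 t = 0 \<and> w2 t = 0"
proof -
  have cw: "continuous_on UNIV w1" "continuous_on UNIV w2"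
    using DERIV_isCont[OF deriv1] DERIV_isCont[OF deriv2]
    by (simp_all add: continuous_at_imp_continuous_on)
  have cw_s: "continuous_on {0..2*pi} (\<lambda>t. w1 (t - s))" "continuous_on {0..2*pi} (\<lambda>t. w2 (t - s))"
    by (auto intro!: continuous_on_compose2[OF cw(1)] continuous_on_compose2[OF cw(2)] continuous_intros)
  define I where "I = L2_norm_sq w1 + L2_norm_sq w2"
  have I_nonneg: "L2_norm_sq w1 \<ge> 0" "L2_norm_sq w2 \<ge> 0"
    using cw by (simp_all add: L2_norm_sq_nonneg continuous_on_subset)
  have g_L2: "L2_norm_sq g \<le> 2 * C^2 * I"
    if g: "continuous_on UNIV g" "\<And>t. t \<in> {0..2*pi} \<Longrightarrow> \<bar>g t\<bar> \<le> C * (\<bar>w1 (t - s)\<bar> + \<bar>w2 (t - s)\<bar>)"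
    for g
  proof -
    have "((\<lambda>t. 2 * C^2 * ((w1 (t - s))^2 + (w2 (t - s))^2)) has_integral 2 * C^2 * I) {0..2*pi}"
      using has_integral_L2_norm_sq[OF cw_s(1)] has_integral_L2_norm_sq[OF cw_s(2)]
      unfolding I_def L2_norm_sq_shift[OF cw(1) per(1)] L2_norm_sq_shift[OF cw(2) per(2)]
      by (intro has_integral_mult_right has_integral_add)
    moreover have "(g t)^2 \<le> 2 * C^2 * ((w1 (t - s))^2 + (w2 (t - s))^2)" if "t \<in> {0..2*pi}" for t
    proof -
      have "(g t)^2 \<le> (C * (\<bar>w1 (t - s)\<bar> + \<bar>w2 (t - s)\<bar>))^2"
        using power_mono[OF g(2)[OF that], of 2] by simp
      also have "\<dots> = C^2 * (\<bar>w1 (t - s)\<bar> + \<bar>w2 (t - s)\<bar>)^2"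
        by (simp add: power_mult_distrib)
      also have "\<dots> \<le> 2 * C^2 * ((w1 (t - s))^2 + (w2 (t - s))^2)"
        using mult_left_mono[OF sq_abs_add_abs_le[of "w1 (t - s)" "w2 (t - s)"], of "C^2"]
        by (simp add: algebra_simps)
      finally show ?thesis .
    qed
    ultimately show ?thesis
      using has_integral_le[OF has_integral_L2_norm_sq[OF continuous_on_subset[OF g(1) subset_UNIV]]]
      by blast
  qed
  have "\<delta>^2 * L2_norm_sq w1 \<le> L2_norm_sq g1" "\<delta>^2 * L2_norm_sq w2 \<le> L2_norm_sq g2"
    using delay_equation_L2_bound[OF per(1) cont(1) deriv1 \<delta>(1,2)]
      delay_equation_L2_bound[OF per(2) cont(2) deriv2 \<delta>(1,3)] \<delta>(1)
    by (simp_all add: pos_le_divide_eq mult.commute)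
  then have "\<delta>^2 * I \<le> 4 * C^2 * I"
    using g_L2[OF cont(1) g_bound(1)] g_L2[OF cont(2) g_bound(2)] by (simp add: I_def distrib_left)
  also have "\<dots> \<le> \<delta>^2 / 2 * I"
    using small I_nonneg by (intro mult_right_mono) (simp_all add: I_def)
  finally have "I \<le> 0"
    using \<delta>(1) I_nonneg by (simp add: I_def mult_le_cancel_right)
  then have "L2_norm_sq w1 = 0" "L2_norm_sq w2 = 0"
    using I_nonneg by (simp_all add: I_def)
  then have zero: "w1 u = 0" "w2 u = 0" if "u \<in> {0..2*pi}" for u
    using L2_norm_sq_eq_0_imp_zero[OF continuous_on_subset[OF cw(1) subset_UNIV] _ that]
      L2_norm_sq_eq_0_imp_zero[OF continuous_on_subset[OF cw(2) subset_UNIV] _ that] by simp_all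
  have "0 < 2 * pi" by simp
  obtain t1 where "t1 \<in> {0..2*pi}" "w1 t = w1 t1"
    using periodic_fun_simple_reduce[OF per(1) \<open>0 < 2 * pi\<close>] .
  moreover obtain t2 where "t2 \<in> {0..2*pi}" "w2 t = w2 t2"
    using periodic_fun_simple_reduce[OF per(2) \<open>0 < 2 * pi\<close>] .
  ultimately show ?thesis
    using zero by simp
qed

section \<open>A sup-norm bound on \<open>E_hat\<close>\<close>

lemma E_hat_periodic: "x \<in> E_hat \<Longrightarrow> periodic_fun_simple x (2*pi)"
  by (simp add: E_hat_def periodic_fun_simple_def)

lemma abs_integral_le_AM_GM:
  fixes Y :: "real \<Rightarrow> real"
  assumes Y: "Y integrable_on {a..b}" "(\<lambda>t. (Y t)^2) integrable_on {a..b}"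
    and "a \<le> b" "c \<ge> 0"
  shows "2 * c * \<bar>integral {a..b} Y\<bar> \<le> integral {a..b} (\<lambda>t. (Y t)^2) + (b - a) * c^2"
proof -
  have hR: "((\<lambda>t. (Y t)^2 + c^2) has_integral integral {a..b} (\<lambda>t. (Y t)^2) + (b - a) * c^2) {a..b}"
    using has_integral_add[OF integrable_integral[OF Y(2)] has_integral_const_real[of "c^2" a b]]
      \<open>a \<le> b\<close> by simp
  have "2 * c * integral {a..b} Y \<le> integral {a..b} (\<lambda>t. (Y t)^2) + (b - a) * c^2"
  proof (rule has_integral_le[OF has_integral_mult_right[OF integrable_integral[OF Y(1)]] hR])
    show "2 * c * Y t \<le> (Y t)^2 + c^2" for t
      using sum_squares_ge_zero[of "Y t - c" 0] by (simp add: power2_eq_square algebra_simps)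
  qed
  moreover have "- (2 * c * integral {a..b} Y) \<le> integral {a..b} (\<lambda>t. (Y t)^2) + (b - a) * c^2"
  proof (rule has_integral_le[OF has_integral_neg[OF has_integral_mult_right[OF integrable_integral[OF Y(1)]]] hR])
    show "- (2 * c * Y t) \<le> (Y t)^2 + c^2" for t
      using sum_squares_ge_zero[of "Y t + c" 0] by (simp add: power2_eq_square algebra_simps)
  qed
  ultimately show ?thesis
    using \<open>c \<ge> 0\<close> by (simp add: abs_if)
qed

lemma abs_le_of_integral_zero:
  fixes x :: "real \<Rightarrow> real"
  assumes cx: "continuous_on {a..b} x" and "a < b" and mean: "integral {a..b} x = 0"
    and osc: "\<And>u. u \<in> {a..b} \<Longrightarrow> \<bar>x t - x u\<bar> \<le> B"
  shows "\<bar>x t\<bar> \<le> B"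
proof -
  have const: "((\<lambda>u. c) has_integral (b - a) * c) {a..b}" for c
    using has_integral_const_real[of c a b] \<open>a < b\<close> by simp
  have "(x has_integral 0) {a..b}"
    using integrable_integral[OF integrable_continuous_interval[OF cx]] mean by simp
  from has_integral_diff[OF const[of "x t"] this]
  have hd: "((\<lambda>u. x t - x u) has_integral (b - a) * x t) {a..b}"
    by simp
  have "(b - a) * x t \<le> (b - a) * B"
    by (rule has_integral_le[OF hd const]) (metis abs_le_iff osc)
  then have "x t \<le> B"
    using \<open>a < b\<close> by (simp add: mult_le_cancel_left_pos)
  have "(b - a) * (- B) \<le> (b - a) * x t"
    by (rule has_integral_le[OF const hd]) (metis abs_le_iff minus_diff_eq neg_le_iff_le osc)
  then have "- B \<le> x t"
    using mult_left_le_imp_le[of "b - a" "- B" "x t"] \<open>a < b\<close> by simp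
  with \<open>x t \<le> B\<close> show ?thesis
    by (simp add: abs_le_iff)
qed

lemma weak_deriv_L2_oscillation_bound:
  assumes "weak_deriv_L2 x Y" and N: "integral {0..2*pi} (\<lambda>t. (Y t)^2) \<le> m^2" and "m > 0"
    and ab: "0 \<le> a" "a \<le> b" "b \<le> 2*pi"
  shows "\<bar>x b - x a\<bar> \<le> m * (1 + 2*pi) / 2"
proof -
  have Y: "Y integrable_on {0..2*pi}" "(\<lambda>t. (Y t)^2) integrable_on {0..2*pi}"
    and xY: "\<And>t. t \<in> {0..2*pi} \<Longrightarrow> x t = x 0 + integral {0..t} Y"
    using assms(1) unfolding weak_deriv_L2_def by blast+
  have sub: "{a..b} \<subseteq> {0..2*pi}"
    using ab by auto
  have "x b - x a = integral {a..b} Y"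
    using xY[of a] xY[of b] ab
      Henstock_Kurzweil_Integration.integral_combine[OF ab(1,2) integrable_on_subinterval[OF Y(1)]]
    by auto
  moreover have "2 * m * \<bar>integral {a..b} Y\<bar> \<le> integral {a..b} (\<lambda>t. (Y t)^2) + (b - a) * m^2"
    using ab \<open>m > 0\<close> integrable_on_subinterval[OF Y(1) sub] integrable_on_subinterval[OF Y(2) sub]
    by (intro abs_integral_le_AM_GM) auto
  moreover have "integral {a..b} (\<lambda>t. (Y t)^2) \<le> integral {0..2*pi} (\<lambda>t. (Y t)^2)"
    by (rule integral_subset_le[OF sub integrable_on_subinterval[OF Y(2) sub] Y(2)]) simp
  moreover have "(b - a) * m^2 \<le> 2*pi * m^2"
    using ab by (intro mult_right_mono) auto
  ultimately have "2 * m * \<bar>x b - x a\<bar> \<le> 2 * m * (m * (1 + 2*pi) / 2)"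
    using N by (simp add: power2_eq_square algebra_simps)
  then show ?thesis
    using \<open>m > 0\<close> by (simp add: mult_le_cancel_left_pos)
qed

lemma Ehat_sup_bound:
  assumes x: "x \<in> E_hat" and m: "Ehat_norm x \<le> m" "m > 0"
  shows "\<bar>x t\<bar> \<le> m * (1 + 2*pi) / 2"
proof -
  have cx: "continuous_on UNIV x" and mean: "integral {0..2*pi} x = 0"
    and ex: "\<exists>y. weak_deriv_L2 x y"
    using x unfolding E_hat_def by auto
  define Y where "Y = (SOME y. weak_deriv_L2 x y)"
  have Y: "weak_deriv_L2 x Y"
    unfolding Y_def using ex by (rule someI_ex)
  have x2: "((\<lambda>t. (x t)^2) has_integral integral {0..2*pi} (\<lambda>t. (x t)^2)) {0..2*pi}"
    by (intro integrable_integral integrable_continuous_interval continuous_intros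
        continuous_on_subset[OF cx subset_UNIV])
  have "Ehat_norm x = sqrt (integral {0..2*pi} (\<lambda>t. (Y t)^2) + integral {0..2*pi} (\<lambda>t. (x t)^2))"
    unfolding Ehat_norm_def Y_def[symmetric]
    using has_integral_add[OF integrable_integral x2] Y
    by (simp add: integral_unique weak_deriv_L2_def)
  then have "integral {0..2*pi} (\<lambda>t. (Y t)^2) + integral {0..2*pi} (\<lambda>t. (x t)^2) \<le> m^2"
    using m(1) by (metis sqrt_le_D)
  then have N: "integral {0..2*pi} (\<lambda>t. (Y t)^2) \<le> m^2"
    using has_integral_nonneg[OF x2] by simp
  have "0 < 2 * pi" by simp
  obtain t0 where t0: "t0 \<in> {0..2*pi}" "x t = x t0"
    using periodic_fun_simple_reduce[OF E_hat_periodic[OF x] \<open>0 < 2 * pi\<close>] .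
  have "\<bar>x t0 - x u\<bar> \<le> m * (1 + 2*pi) / 2" if "u \<in> {0..2*pi}" for u
    using weak_deriv_L2_oscillation_bound[OF Y N m(2), of t0 u]
      weak_deriv_L2_oscillation_bound[OF Y N m(2), of u t0] t0 that
    by (cases "t0 \<le> u") (auto simp: abs_minus_commute)
  then have "\<bar>x t0\<bar> \<le> m * (1 + 2*pi) / 2"
    by (intro abs_le_of_integral_zero[OF continuous_on_subset[OF cx subset_UNIV] \<open>0 < 2 * pi\<close> mean])
  with t0 show ?thesis
    by simp
qed

section \<open>The system (P)\<close>

lemma eigenvalue2_left_eigenvector:
  assumes "eigenvalue2 m11 m12 m21 m22 \<mu>"
  shows "m21 * m11 + (\<mu> - m11) * m21 = \<mu> * m21"
    and "m21 * m12 + (\<mu> - m11) * m22 = \<mu> * (\<mu> - m11)"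
proof -
  obtain v1 v2 where v: "(v1, v2) \<noteq> (0, 0)"
    "m11 * v1 + m12 * v2 = \<mu> * v1" "m21 * v1 + m22 * v2 = \<mu> * v2"
    using assms unfolding eigenvalue2_def by blast
  define d where "d = (m11 - \<mu>) * (m22 - \<mu>) - m12 * m21"
  have "d * v1 = 0" "d * v2 = 0"
    using v(2,3) unfolding d_def by algebra+
  then have "d = 0"
    using v(1) by auto
  then show "m21 * m12 + (\<mu> - m11) * m22 = \<mu> * (\<mu> - m11)"
    unfolding d_def by algebra
qed (simp add: algebra_simps)

lemma sin_ne_1_in_window:
  fixes n :: nat
  assumes "pi/2 + 2 * real n * pi < x" "x < pi/2 + 2 * (real n + 1) * pi"
  shows "sin x \<noteq> 1"
proof
  assume "sin x = 1"
  then obtain j :: int where j: "x = (2 * of_int j + 1/2) * pi"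
    using sin_eq_1 by blast
  then have "(2 * real n) * pi < (2 * of_int j) * pi" "(2 * of_int j) * pi < (2 * (real n + 1)) * pi"
    using assms by (simp_all add: algebra_simps)
  then have "real_of_int (int n) < of_int j" "real_of_int j < of_int (int n + 1)"
    by simp_all
  then have "int n < j" "j < int n + 1"
    by (simp_all only: of_int_less_iff)
  then show False
    by linarith
qed

lemma window_index_unique:
  fixes n1 n2 :: nat
  assumes "pi/2 + 2 * real n1 * pi < x" "x < pi/2 + 2 * (real n1 + 1) * pi"
    and "pi/2 + 2 * real n2 * pi < x" "x < pi/2 + 2 * (real n2 + 1) * pi"
  shows "n1 = n2"
proof -
  have "(2 * real n1) * pi < (2 * (real n2 + 1)) * pi" "(2 * real n2) * pi < (2 * (real n1 + 1)) * pi"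
    using assms by (simp_all add: algebra_simps)
  then have "real n1 < real n2 + 1" "real n2 < real n1 + 1"
    by simp_all
  then show ?thesis by linarith
qed

lemma delay_symbol_nonzero:
  assumes "a > 0" "sin (a * s) \<noteq> 1"
  shows "delay_symbol a s k \<noteq> 0"
proof
  assume zero: "delay_symbol a s k = 0"
  define \<theta> where "\<theta> = of_int k * s"
  have "cos \<theta> = 0" and k: "of_int k = a * sin \<theta>"
    using zero assms(1) by (simp_all add: delay_symbol_def complex_eq_iff \<theta>_def)
  then have "sin \<theta> = 1 \<or> sin \<theta> = -1"
    using sin_cos_squared_add[of \<theta>] by (simp add: power2_eq_1_iff)
  then show False
  proof
    assume "sin \<theta> = 1"
    with k have "\<theta> = a * s" by (simp add: \<theta>_def)
    with \<open>sin \<theta> = 1\<close> assms(2) show False by simp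
  next
    assume "sin \<theta> = -1"
    with k have "\<theta> = - (a * s)" by (simp add: \<theta>_def)
    with \<open>sin \<theta> = -1\<close> assms(2) show False by simp
  qed
qed

lemma delay_symbol_uniform_lower_bound:
  assumes \<mu>: "\<mu> > 0" and l1: "0 < l1" and nonres: "sin (\<mu> * \<tau>) \<noteq> 1"
  obtains \<delta> where "\<delta> > 0"
    "\<And>lam k. lam \<in> {l1..l2} \<Longrightarrow> \<delta> \<le> cmod (delay_symbol (lam * \<mu>) (\<tau> / lam) k)"
proof -
  define \<phi> where "\<phi> k lam = cmod (delay_symbol (lam * \<mu>) (\<tau> / lam) k)" for k lam
  have large: "\<phi> k lam \<ge> 1" if lam: "lam \<in> {l1..l2}" and k: "\<bar>of_int k\<bar> \<ge> l2 * \<mu> + 1" for k lam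
  proof -
    have "\<bar>of_int k\<bar> \<le> \<phi> k lam + lam * \<mu>"
      using norm_triangle_ineq4[of "delay_symbol (lam * \<mu>) (\<tau> / lam) k"
          "of_real (lam * \<mu>) * cis (- (of_int k * (\<tau> / lam)))"] lam l1 \<mu>
      by (simp add: \<phi>_def delay_symbol_def norm_mult)
    moreover have "lam * \<mu> \<le> l2 * \<mu>"
      using lam \<mu> by (simp add: mult_right_mono)
    ultimately show ?thesis
      using k by linarith
  qed
  \<comment> \<open>each of the finitely many remaining \<open>k\<close> is handled by compactness of \<open>{l1..l2}\<close>\<close>
  have "\<exists>m>0. \<forall>lam\<in>{l1..l2}. m \<le> \<phi> k lam" for k
  proof (cases "l1 \<le> l2")
    case True
    have "continuous_on {l1..l2} (\<phi> k)"
      unfolding \<phi>_def[abs_def] delay_symbol_def cis_conv_exp using l1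
      by (intro continuous_intros) auto
    then obtain l0 where l0: "l0 \<in> {l1..l2}" "\<forall>lam\<in>{l1..l2}. \<phi> k l0 \<le> \<phi> k lam"
      using continuous_attains_inf[of "{l1..l2}" "\<phi> k"] True by auto
    have "\<phi> k l0 > 0"
      using l0(1) l1 \<mu> nonres delay_symbol_nonzero[of "l0 * \<mu>" "\<tau> / l0" k]
      by (simp add: \<phi>_def)
    then show ?thesis
      using l0(2) by blast
  qed (auto intro: exI[of _ 1])
  then obtain dk where dk: "\<And>k. dk k > 0" "\<And>k lam. lam \<in> {l1..l2} \<Longrightarrow> dk k \<le> \<phi> k lam"
    by metis
  define N where "N = nat \<lceil>l2 * \<mu> + 1\<rceil>"
  define \<delta> where "\<delta> = Min (insert 1 (dk ` {- int N..int N}))"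
  have "\<delta> > 0"
    unfolding \<delta>_def using dk(1) by (auto simp: Min_gr_iff)
  moreover have "\<delta> \<le> \<phi> k lam" if lam: "lam \<in> {l1..l2}" for k lam
  proof (cases "k \<in> {- int N..int N}")
    case True
    then have "\<delta> \<le> dk k"
      unfolding \<delta>_def by (intro Min_le) auto
    then show ?thesis
      using dk(2)[OF lam] by (meson order_trans)
  next
    case False
    then have "\<bar>k\<bar> > int N"
      by auto
    then have "\<bar>of_int k\<bar> \<ge> l2 * \<mu> + 1"
      unfolding N_def by linarith
    then have "\<phi> k lam \<ge> 1"
      by (rule large[OF lam])
    moreover have "\<delta> \<le> 1"
      unfolding \<delta>_def by simp
    ultimately show ?thesis
      by linarith
  qed
  ultimately show ?thesis
    using that unfolding \<phi>_def by blast
qed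

lemma abs_add_abs_le_of_det_ne_0:
  fixes p1 q1 p2 q2 :: real
  assumes "p1 * q2 - p2 * q1 \<noteq> 0"
  obtains L where "\<And>u1 u2. \<bar>u1\<bar> + \<bar>u2\<bar> \<le> L * (\<bar>p1 * u1 + q1 * u2\<bar> + \<bar>p2 * u1 + q2 * u2\<bar>)"
proof
  fix u1 u2 :: real
  define D where "D = p1 * q2 - p2 * q1"
  define W1 where "W1 = p1 * u1 + q1 * u2"
  define W2 where "W2 = p2 * u1 + q2 * u2"
  have "D * u1 = q2 * W1 - q1 * W2" "D * u2 = p1 * W2 - p2 * W1"
    unfolding D_def W1_def W2_def by algebra+
  then have "\<bar>D\<bar> * (\<bar>u1\<bar> + \<bar>u2\<bar>) \<le> (\<bar>q2\<bar> * \<bar>W1\<bar> + \<bar>q1\<bar> * \<bar>W2\<bar>) + (\<bar>p1\<bar> * \<bar>W2\<bar> + \<bar>p2\<bar> * \<bar>W1\<bar>)"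
    by (metis abs_mult abs_triangle_ineq4 add_mono distrib_left)
  also have "\<dots> \<le> (\<bar>p1\<bar> + \<bar>q1\<bar> + \<bar>p2\<bar> + \<bar>q2\<bar>) * (\<bar>W1\<bar> + \<bar>W2\<bar>)"
    by (simp add: algebra_simps)
  finally show "\<bar>u1\<bar> + \<bar>u2\<bar> \<le> (\<bar>p1\<bar> + \<bar>q1\<bar> + \<bar>p2\<bar> + \<bar>q2\<bar>) / \<bar>p1 * q2 - p2 * q1\<bar>
                  * (\<bar>p1 * u1 + q1 * u2\<bar> + \<bar>p2 * u1 + q2 * u2\<bar>)"
    using assms by (simp add: D_def W1_def W2_def field_simps)
qed

lemma left_eigenvector_combination_has_derivative:
  fixes x1 x2 :: "real \<Rightarrow> real"
  assumes der1: "\<And>t. (x1 has_real_derivative (- lam * (a11 * x1 (t - s) + a12 * x2 (t - s)) * (b1 + x1 t))) (at t)"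
    and der2: "\<And>t. (x2 has_real_derivative (- lam * (a21 * x1 (t - s) + a22 * x2 (t - s)) * (b2 + x2 t))) (at t)"
    and ev: "p * (b1 * a11) + q * (b2 * a21) = \<mu> * p" "p * (b1 * a12) + q * (b2 * a22) = \<mu> * q"
  shows "((\<lambda>t. p * x1 t + q * x2 t) has_real_derivative
           - (lam * \<mu>) * (p * x1 (t - s) + q * x2 (t - s))
           + - lam * (p * x1 t * (a11 * x1 (t - s) + a12 * x2 (t - s))
                      + q * x2 t * (a21 * x1 (t - s) + a22 * x2 (t - s)))) (at t)"
proof -
  have "p * (- lam * (a11 * y1 + a12 * y2) * (b1 + z1)) + q * (- lam * (a21 * y1 + a22 * y2) * (b2 + z2))
          = - lam * (y1 * (p * (b1 * a11) + q * (b2 * a21)) + y2 * (p * (b1 * a12) + q * (b2 * a22)))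
            + - lam * (p * z1 * (a11 * y1 + a12 * y2) + q * z2 * (a21 * y1 + a22 * y2))"
    for y1 y2 z1 z2
    by (simp add: algebra_simps)
  also have "\<dots> y1 y2 z1 z2 = - (lam * \<mu>) * (p * y1 + q * y2)
            + - lam * (p * z1 * (a11 * y1 + a12 * y2) + q * z2 * (a21 * y1 + a22 * y2))"
    for y1 y2 z1 z2
    unfolding ev by (simp add: algebra_simps)
  finally show ?thesis
    using DERIV_add[OF DERIV_cmult[OF der1, of p] DERIV_cmult[OF der2, of q]] by simp
qed

lemma abs_quadratic_term_le:
  fixes lam \<epsilon> :: real
  assumes z: "\<bar>z1\<bar> \<le> \<epsilon>" "\<bar>z2\<bar> \<le> \<epsilon>" and "lam \<ge> 0"
    and P: "\<bar>p\<bar> + \<bar>q\<bar> \<le> P" and Y: "\<bar>y1\<bar> + \<bar>y2\<bar> \<le> Y"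
  shows "\<bar>lam * (p * z1 * (a11 * y1 + a12 * y2) + q * z2 * (a21 * y1 + a22 * y2))\<bar>
           \<le> lam * \<epsilon> * (P * ((\<bar>a11\<bar> + \<bar>a12\<bar> + \<bar>a21\<bar> + \<bar>a22\<bar>) * Y))"
proof -
  define AY where "AY = (\<bar>a11\<bar> + \<bar>a12\<bar> + \<bar>a21\<bar> + \<bar>a22\<bar>) * Y"
  have lin: "\<bar>a * y1 + b * y2\<bar> \<le> AY" if "\<bar>a\<bar> + \<bar>b\<bar> \<le> \<bar>a11\<bar> + \<bar>a12\<bar> + \<bar>a21\<bar> + \<bar>a22\<bar>" for a b
  proof -
    have "\<bar>a * y1 + b * y2\<bar> \<le> \<bar>a\<bar> * \<bar>y1\<bar> + \<bar>b\<bar> * \<bar>y2\<bar>"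
      by (metis abs_mult abs_triangle_ineq)
    also have "\<dots> \<le> (\<bar>a\<bar> + \<bar>b\<bar>) * (\<bar>y1\<bar> + \<bar>y2\<bar>)"
      by (simp add: algebra_simps)
    also have "\<dots> \<le> AY"
      unfolding AY_def using that Y by (intro mult_mono) auto
    finally show ?thesis .
  qed
  have "\<bar>p * z1 * (a11 * y1 + a12 * y2)\<bar> \<le> \<bar>p\<bar> * (\<epsilon> * AY)"
    "\<bar>q * z2 * (a21 * y1 + a22 * y2)\<bar> \<le> \<bar>q\<bar> * (\<epsilon> * AY)"
    unfolding abs_mult mult.assoc using z
    by (auto intro!: mult_left_mono mult_mono lin)
  then have "\<bar>p * z1 * (a11 * y1 + a12 * y2) + q * z2 * (a21 * y1 + a22 * y2)\<bar>
               \<le> (\<bar>p\<bar> + \<bar>q\<bar>) * (\<epsilon> * AY)"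
    by (smt (verit) abs_triangle_ineq distrib_right)
  also have "\<dots> \<le> P * (\<epsilon> * AY)"
    using P z lin[of 0 0] by (intro mult_right_mono) auto
  finally have "lam * \<bar>p * z1 * (a11 * y1 + a12 * y2) + q * z2 * (a21 * y1 + a22 * y2)\<bar>
                  \<le> lam * (P * (\<epsilon> * AY))"
    by (rule mult_left_mono) (fact \<open>lam \<ge> 0\<close>)
  then show ?thesis
    using \<open>lam \<ge> 0\<close> by (simp add: abs_mult AY_def mult_ac)
qed

lemma small_solution_vanishes:
  fixes x1 x2 :: "real \<Rightarrow> real"
  assumes per: "periodic_fun_simple x1 (2*pi)" "periodic_fun_simple x2 (2*pi)"
    and der1: "\<And>t. (x1 has_real_derivative (- lam * (a11 * x1 (t - s) + a12 * x2 (t - s)) * (b1 + x1 t))) (at t)"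
    and der2: "\<And>t. (x2 has_real_derivative (- lam * (a21 * x1 (t - s) + a22 * x2 (t - s)) * (b2 + x2 t))) (at t)"
    and ev1: "p1 * (b1 * a11) + q1 * (b2 * a21) = \<mu>1 * p1" "p1 * (b1 * a12) + q1 * (b2 * a22) = \<mu>1 * q1"
    and ev2: "p2 * (b1 * a11) + q2 * (b2 * a21) = \<mu>2 * p2" "p2 * (b1 * a12) + q2 * (b2 * a22) = \<mu>2 * q2"
    and inv: "\<And>u1 u2. \<bar>u1\<bar> + \<bar>u2\<bar> \<le> L * (\<bar>p1 * u1 + q1 * u2\<bar> + \<bar>p2 * u1 + q2 * u2\<bar>)"
    and \<delta>: "\<delta> > 0" "\<And>k. \<delta> \<le> cmod (delay_symbol (lam * \<mu>1) s k)"
      "\<And>k. \<delta> \<le> cmod (delay_symbol (lam * \<mu>2) s k)"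
    and lam: "lam \<ge> 0"
    and small: "\<And>t. t \<in> {0..2*pi} \<Longrightarrow> \<bar>x1 t\<bar> \<le> \<epsilon> \<and> \<bar>x2 t\<bar> \<le> \<epsilon>"
    and \<epsilon>: "8 * (lam * \<epsilon> * ((\<bar>p1\<bar> + \<bar>q1\<bar> + \<bar>p2\<bar> + \<bar>q2\<bar>)
                  * ((\<bar>a11\<bar> + \<bar>a12\<bar> + \<bar>a21\<bar> + \<bar>a22\<bar>) * L)))^2 \<le> \<delta>^2"
  shows "x1 t = 0 \<and> x2 t = 0"
proof -
  define A where "A = \<bar>a11\<bar> + \<bar>a12\<bar> + \<bar>a21\<bar> + \<bar>a22\<bar>"
  define P where "P = \<bar>p1\<bar> + \<bar>q1\<bar> + \<bar>p2\<bar> + \<bar>q2\<bar>"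
  define w where "w p q t = p * x1 t + q * x2 t" for p q t
  define N where "N p q t = - lam * (p * x1 t * (a11 * x1 (t - s) + a12 * x2 (t - s))
                                     + q * x2 t * (a21 * x1 (t - s) + a22 * x2 (t - s)))" for p q t
  have cx: "continuous_on UNIV x1" "continuous_on UNIV x2"
    using DERIV_isCont[OF der1] DERIV_isCont[OF der2]
    by (simp_all add: continuous_at_imp_continuous_on)
  have cN: "continuous_on UNIV (N p q)" for p q
  proof -
    have "continuous_on UNIV (\<lambda>t. x1 (t - s))" "continuous_on UNIV (\<lambda>t. x2 (t - s))"
      by (auto intro!: continuous_on_compose2[OF cx(1)] continuous_on_compose2[OF cx(2)] continuous_intros)
    then show ?thesis
      unfolding N_def by (intro continuous_intros cx)
  qed
  have per_w: "periodic_fun_simple (w p q) (2*pi)" for p q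
    using per by (simp add: periodic_fun_simple_def w_def)
  have dw: "(w p q has_real_derivative (- (lam * \<mu>) * w p q (t - s) + N p q t)) (at t)"
    if "p * (b1 * a11) + q * (b2 * a21) = \<mu> * p" "p * (b1 * a12) + q * (b2 * a22) = \<mu> * q" for p q \<mu> t
    using left_eigenvector_combination_has_derivative[OF der1 der2 that]
    unfolding w_def[abs_def] N_def by simp
  define C where "C = lam * \<epsilon> * (P * (A * L))"
  have bound: "\<bar>N p q t\<bar> \<le> C * (\<bar>w p1 q1 (t - s)\<bar> + \<bar>w p2 q2 (t - s)\<bar>)"
    if t: "t \<in> {0..2*pi}" and pq: "\<bar>p\<bar> + \<bar>q\<bar> \<le> P" for p q t
  proof -
    have "\<bar>N p q t\<bar> = \<bar>lam * (p * x1 t * (a11 * x1 (t - s) + a12 * x2 (t - s))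
                                     + q * x2 t * (a21 * x1 (t - s) + a22 * x2 (t - s)))\<bar>"
      by (simp add: N_def)
    also have "\<dots> \<le> lam * \<epsilon> * (P * (A * (L * (\<bar>w p1 q1 (t - s)\<bar> + \<bar>w p2 q2 (t - s)\<bar>))))"
      unfolding A_def using small[OF t] lam pq inv[of "x1 (t - s)" "x2 (t - s)"]
      by (intro abs_quadratic_term_le) (auto simp: w_def)
    finally show ?thesis
      by (simp add: C_def mult_ac)
  qed
  have "8 * C^2 \<le> \<delta>^2"
    using \<epsilon> by (simp add: C_def P_def A_def)
  then have "w p1 q1 t = 0 \<and> w p2 q2 t = 0"
    using bound[of _ p1 q1] bound[of _ p2 q2]
    by (intro coupled_delay_equations_vanish[OF per_w per_w cN cN dw[OF ev1] dw[OF ev2] \<delta>])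
      (simp_all add: P_def)
  then have "\<bar>x1 t\<bar> + \<bar>x2 t\<bar> \<le> 0"
    using inv[of "x1 t" "x2 t"] by (simp add: w_def)
  then have "\<bar>x1 t\<bar> = 0" "\<bar>x2 t\<bar> = 0"
    using abs_ge_zero[of "x1 t"] abs_ge_zero[of "x2 t"] by linarith+
  then show ?thesis
    by simp
qed

lemma uniformly_small_factor:
  fixes \<delta> :: real
  assumes "\<delta> > 0"
  obtains \<epsilon> where "\<epsilon> > 0" "\<And>lam. lam \<in> {0..l} \<Longrightarrow> 8 * (lam * \<epsilon> * M)^2 \<le> \<delta>^2"
proof -
  define \<epsilon> where "\<epsilon> = \<delta> / (3 * (\<bar>l * M\<bar> + 1))"
  show ?thesis
  proof (rule that)
    show "\<epsilon> > 0"
      using assms by (simp add: \<epsilon>_def)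
    fix lam
    assume "lam \<in> {0..l}"
    then have "\<bar>lam * \<epsilon> * M\<bar> \<le> \<epsilon> * \<bar>l * M\<bar>"
      using \<open>\<epsilon> > 0\<close> by (simp add: abs_mult mult_right_mono mult_ac)
    also have "\<dots> \<le> \<delta> / 3"
      using assms by (simp add: \<epsilon>_def field_simps)
    finally have "(lam * \<epsilon> * M)^2 \<le> (\<delta> / 3)^2"
      by (metis abs_ge_zero power2_abs power_mono)
    then have "(lam * \<epsilon> * M)^2 * 9 \<le> \<delta>^2"
      by (simp add: power_divide)
    then show "8 * (lam * \<epsilon> * M)^2 \<le> \<delta>^2"
      using zero_le_power2[of "lam * \<epsilon> * M"] by linarith
  qed
qed

lemma small_solutions_vanish:
  assumes eig: "eigenvalue2 (b1 * a11) (b1 * a12) (b2 * a21) (b2 * a22) \<mu>1"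
      "eigenvalue2 (b1 * a11) (b1 * a12) (b2 * a21) (b2 * a22) \<mu>2"
    and "\<mu>1 \<noteq> \<mu>2" "b2 * a21 \<noteq> 0" and \<mu>: "\<mu>1 > 0" "\<mu>2 > 0"
    and nonres: "sin (\<mu>1 * \<tau>) \<noteq> 1" "sin (\<mu>2 * \<tau>) \<noteq> 1" and "0 < lam1"
  obtains \<epsilon> where "\<epsilon> > 0"
    "\<And>lam x1 x2 t. lam \<in> {lam1..lam2} \<Longrightarrow> is_solution_P a11 a12 a21 a22 b1 b2 \<tau> x1 x2 lam \<Longrightarrow>
       (\<And>t. t \<in> {0..2*pi} \<Longrightarrow> \<bar>x1 t\<bar> \<le> \<epsilon> \<and> \<bar>x2 t\<bar> \<le> \<epsilon>) \<Longrightarrow> x1 t = 0 \<and> x2 t = 0"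
proof -
  define p where "p = b2 * a21"
  define q1 where "q1 = \<mu>1 - b1 * a11"
  define q2 where "q2 = \<mu>2 - b1 * a11"
  have ev1: "p * (b1 * a11) + q1 * (b2 * a21) = \<mu>1 * p" "p * (b1 * a12) + q1 * (b2 * a22) = \<mu>1 * q1"
    unfolding p_def q1_def by (rule eigenvalue2_left_eigenvector[OF eig(1)])+
  have ev2: "p * (b1 * a11) + q2 * (b2 * a21) = \<mu>2 * p" "p * (b1 * a12) + q2 * (b2 * a22) = \<mu>2 * q2"
    unfolding p_def q2_def by (rule eigenvalue2_left_eigenvector[OF eig(2)])+
  have "p * q2 - p * q1 \<noteq> 0"
    using \<open>\<mu>1 \<noteq> \<mu>2\<close> \<open>b2 * a21 \<noteq> 0\<close> by (simp add: p_def q1_def q2_def right_diff_distrib[symmetric])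
  then obtain L where inv: "\<And>u1 u2. \<bar>u1\<bar> + \<bar>u2\<bar> \<le> L * (\<bar>p * u1 + q1 * u2\<bar> + \<bar>p * u1 + q2 * u2\<bar>)"
    using abs_add_abs_le_of_det_ne_0 by blast
  obtain \<delta>1 \<delta>2 where \<delta>: "\<delta>1 > 0" "\<delta>2 > 0"
    "\<And>lam k. lam \<in> {lam1..lam2} \<Longrightarrow> \<delta>1 \<le> cmod (delay_symbol (lam * \<mu>1) (\<tau> / lam) k)"
    "\<And>lam k. lam \<in> {lam1..lam2} \<Longrightarrow> \<delta>2 \<le> cmod (delay_symbol (lam * \<mu>2) (\<tau> / lam) k)"
    using delay_symbol_uniform_lower_bound[OF \<mu>(1) \<open>0 < lam1\<close> nonres(1)]
      delay_symbol_uniform_lower_bound[OF \<mu>(2) \<open>0 < lam1\<close> nonres(2)] by metis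
  define \<delta> where "\<delta> = min \<delta>1 \<delta>2"
  have "\<delta> > 0"
    using \<delta> by (simp add: \<delta>_def)
  then obtain \<epsilon> where "\<epsilon> > 0" and \<epsilon>: "\<And>lam. lam \<in> {0..lam2} \<Longrightarrow>
      8 * (lam * \<epsilon> * ((\<bar>p\<bar> + \<bar>q1\<bar> + \<bar>p\<bar> + \<bar>q2\<bar>)
             * ((\<bar>a11\<bar> + \<bar>a12\<bar> + \<bar>a21\<bar> + \<bar>a22\<bar>) * L)))^2 \<le> \<delta>^2"
    by (rule uniformly_small_factor[where l = lam2 and
          M = "(\<bar>p\<bar> + \<bar>q1\<bar> + \<bar>p\<bar> + \<bar>q2\<bar>) * ((\<bar>a11\<bar> + \<bar>a12\<bar> + \<bar>a21\<bar> + \<bar>a22\<bar>) * L)"]) blast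
  show ?thesis
  proof (rule that[OF \<open>\<epsilon> > 0\<close>])
    fix lam x1 x2 t
    assume lam: "lam \<in> {lam1..lam2}" and sol: "is_solution_P a11 a12 a21 a22 b1 b2 \<tau> x1 x2 lam"
      and small: "\<And>t. t \<in> {0..2*pi} \<Longrightarrow> \<bar>x1 t\<bar> \<le> \<epsilon> \<and> \<bar>x2 t\<bar> \<le> \<epsilon>"
    have E: "x1 \<in> E_hat" "x2 \<in> E_hat" and "lam > 0"
      and der1: "\<And>t. (x1 has_real_derivative
                   (- lam * (a11 * x1 (t - \<tau>/lam) + a12 * x2 (t - \<tau>/lam)) * (b1 + x1 t))) (at t)"
      and der2: "\<And>t. (x2 has_real_derivative
                   (- lam * (a21 * x1 (t - \<tau>/lam) + a22 * x2 (t - \<tau>/lam)) * (b2 + x2 t))) (at t)"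
      using sol unfolding is_solution_P_def by blast+
    have \<delta>_lam: "\<delta> \<le> cmod (delay_symbol (lam * \<mu>1) (\<tau> / lam) k)"
      "\<delta> \<le> cmod (delay_symbol (lam * \<mu>2) (\<tau> / lam) k)" for k
      using \<delta>(3,4)[OF lam] by (simp_all add: \<delta>_def min.coboundedI1 min.coboundedI2)
    show "x1 t = 0 \<and> x2 t = 0"
      using lam \<open>0 < lam1\<close> \<open>lam > 0\<close>
      by (intro small_solution_vanishes[OF E_hat_periodic[OF E(1)] E_hat_periodic[OF E(2)] der1 der2
            ev1 ev2 inv \<open>\<delta> > 0\<close> \<delta>_lam _ small \<epsilon>]) auto
  qed
qed

theorem lemma4p1:
  fixes r1 r2 a11 a12 a21 a22 b1 b2 \<mu>1 \<mu>2 \<tau> lam1 lam2 :: real and n1 n2 :: nat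
  assumes pos_A: "a11 > 0" "a12 > 0" "a21 > 0" "a22 > 0"
    and inv_A: "a11 * a22 - a12 * a21 \<noteq> 0"
    and b_def: "a11 * b1 + a12 * b2 = r1" "a21 * b1 + a22 * b2 = r2"
    and pos_b: "b1 > 0" "b2 > 0"
    and posdef: "\<And>y1 y2. (y1, y2) \<noteq> (0, 0) \<Longrightarrow>
                   (a11 * y1 + a12 * y2) * y1 + (a21 * y1 + a22 * y2) * y2 > 0"
    and eig: "eigenvalue2 (b1 * a11) (b1 * a12) (b2 * a21) (b2 * a22) \<mu>1"
             "eigenvalue2 (b1 * a11) (b1 * a12) (b2 * a21) (b2 * a22) \<mu>2"
    and pos_mu: "\<mu>1 > 0" "\<mu>2 > 0"
    and tau_pos: "\<tau> > 0"
    and tau_min: "min (2*pi/\<mu>1) (2*pi/\<mu>2) < \<tau>"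
    and n_neq: "n1 \<noteq> n2"
    and n1_bd: "pi/2 + 2 * real n1 * pi < \<mu>1 * \<tau>" "\<mu>1 * \<tau> < pi/2 + 2 * (real n1 + 1) * pi"
    and n2_bd: "pi/2 + 2 * real n2 * pi < \<mu>2 * \<tau>" "\<mu>2 * \<tau> < pi/2 + 2 * (real n2 + 1) * pi"
    and lam: "0 < lam1" "lam1 < lam2"
  shows "\<exists>m1 > 0. \<forall>x1 x2 lam.
           (x1, x2) \<in> Theta0 b1 b2 \<and> lam \<in> {lam1..lam2} \<and>
           is_solution_P a11 a12 a21 a22 b1 b2 \<tau> x1 x2 lam \<and>
           \<not> (x1 = (\<lambda>t. 0) \<and> x2 = (\<lambda>t. 0))
           \<longrightarrow> \<not> (Ehat_norm x1 \<le> m1 \<and> Ehat_norm x2 \<le> m1)"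
proof -
  have "\<mu>1 \<noteq> \<mu>2"
    using window_index_unique[OF n1_bd] n2_bd n_neq by metis
  moreover have "b2 * a21 \<noteq> 0"
    using pos_A pos_b by simp
  ultimately obtain \<epsilon> where \<epsilon>: "\<epsilon> > 0"
    "\<And>lam x1 x2 t. lam \<in> {lam1..lam2} \<Longrightarrow> is_solution_P a11 a12 a21 a22 b1 b2 \<tau> x1 x2 lam \<Longrightarrow>
       (\<And>t. t \<in> {0..2*pi} \<Longrightarrow> \<bar>x1 t\<bar> \<le> \<epsilon> \<and> \<bar>x2 t\<bar> \<le> \<epsilon>) \<Longrightarrow> x1 t = 0 \<and> x2 t = 0"
    using small_solutions_vanish[OF eig _ _ pos_mu sin_ne_1_in_window[OF n1_bd]
        sin_ne_1_in_window[OF n2_bd] lam(1)] by blast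
  define m1 where "m1 = 2 * \<epsilon> / (1 + 2*pi)"
  have "1 + 2*pi > 0"
    using pi_gt_zero by linarith
  then have "m1 > 0" and m1: "m1 * (1 + 2*pi) / 2 = \<epsilon>"
    using \<open>\<epsilon> > 0\<close> by (simp_all add: m1_def)
  show ?thesis
  proof (intro exI[of _ m1] conjI \<open>m1 > 0\<close> allI impI notI)
    fix x1 x2 lam
    assume "(x1, x2) \<in> Theta0 b1 b2 \<and> lam \<in> {lam1..lam2} \<and>
           is_solution_P a11 a12 a21 a22 b1 b2 \<tau> x1 x2 lam \<and> \<not> (x1 = (\<lambda>t. 0) \<and> x2 = (\<lambda>t. 0))"
      and "Ehat_norm x1 \<le> m1 \<and> Ehat_norm x2 \<le> m1"
    moreover from this have "\<bar>x1 t\<bar> \<le> \<epsilon> \<and> \<bar>x2 t\<bar> \<le> \<epsilon>" for t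
      using Ehat_sup_bound[OF _ _ \<open>m1 > 0\<close>, of x1 t] Ehat_sup_bound[OF _ _ \<open>m1 > 0\<close>, of x2 t] m1
      by (auto simp: Theta0_def)
    ultimately show False
      using \<epsilon>(2) by (auto simp: fun_eq_iff)
  qed
qed

end
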